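(* There is an absolute constant $\delta_0>0$ such that the following holds. Let $0<\delta_1<\delta_0$ and $0<\delta_2<\delta_1^3$ with $\delta_1/\delta_2\in\mathbb{N}$, and let $m\in\mathbb{N}\cup\{\infty\}$. Partition $\mathbb{C}/\mathbb{Z}[i]$ into finitely many sets each of diameter at most $\delta_2$, and color each $x=(a_1,a_2,\dots)\in\ell^1(\mathbb{N}_{\le m};\mathbb{R}/\mathbb{Z})$ by the part containing $F(x)=\sum_{j}(e(a_j)-1)\bmod\mathbb{Z}[i]$. Then for all $x,s\in\ell^1(\mathbb{N}_{\le m};\mathbb{R}/\mathbb{Z})$ with $s\in S_m$, the elements $x$, $x+s$, $x+2s$ do not all receive the same color.
   Context: $\|x\|_{\mathbb{R}/\mathbb{Z}}$ is the distance from $x$ to the nearest integer; $e(x)=e^{2\pi i x}$ for $x\in\mathbb{R}/\mathbb{Z}$. For $m\in\mathbb{N}$, $\ell^1(\mathbb{N}_{\le m};\mathbb{R}/\mathbb{Z})$ is $(\mathbb{R}/\mathbb{Z})^m$ with norm $\sum_{i\le m}\|a_i\|_{\mathbb{R}/\mathbb{Z}}$; for $m=\infty$ it is the group $\ell^1(\mathbb{N};\mathbb{R}/\mathbb{Z})$ of sequences in $\mathbb{R}/\mathbb{Z}$ with $\sum_i\|a_i\|_{\mathbb{R}/\mathbb{Z}}<\infty$ (so the sum defining $F$ converges since $|e(a)-1|\le 2\pi\|a\|_{\mathbb{R}/\mathbb{Z}}$). Diameters in $\mathbb{C}/\mathbb{Z}[i]$ are with respect to the quotient metric. Let $\eta_m=2^{-100m}$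 for $m\in\mathbb{N}$ and $\eta_\infty=0$. $S_m$ is the set of $(a_1,a_2,\dots)\in\ell^1(\mathbb{N}_{\le m};\mathbb{R}/\mathbb{Z})$ for which there is an index $i$ with: (1) $a_i\in(-\delta_1-(2-\eta_m)\delta_2,\,-\delta_1+(2-\eta_m)\delta_2)\subset\mathbb{R}/\mathbb{Z}$; (2) for all $j\ne i$, $a_j\in(-(2-\eta_m)\delta_2,(2-\eta_m)\delta_2)\subset\mathbb{R}/\mathbb{Z}$; (3) $\delta_1-(2-\eta_m)\delta_2<\sum_{j\ne i}\|a_j\|_{\mathbb{R}/\mathbb{Z}}<\delta_1+(2-\eta_m)\delta_2$. *)

theory Defs
  imports "HOL-Analysis.Analysis" "HOL-Library.Extended_Nat"
begin

text \<open>Elements of R/Z are represented by real representatives; all notions below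
are invariant under integer shifts.\<close>

definition rz_norm :: "real \<Rightarrow> real" where
  "rz_norm a = \<bar>a - of_int (round a)\<bar>"

definition e :: "real \<Rightarrow> complex" where
  "e x = exp (2 * of_real pi * \<i> * of_real x)"

definition idx :: "enat \<Rightarrow> nat set" where
  "idx m = {i. 1 \<le> i \<and> enat i \<le> m}"

definition ell1 :: "enat \<Rightarrow> (nat \<Rightarrow> real) set" where
  "ell1 m = {a. (\<forall>i. i \<notin> idx m \<longrightarrow> a i = 0) \<and> summable (\<lambda>i. rz_norm (a i))}"

definition eta :: "enat \<Rightarrow> real" where
  "eta m = (case m of enat n \<Rightarrow> 2 powr (- 100 * real n) | \<infinity> \<Rightarrow> 0)"

definition in_arc :: "real \<Rightarrow> real \<Rightarrow> real \<Rightarrow> bool" where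
  "in_arc c r a \<longleftrightarrow> (\<exists>k::int. c - r < a + of_int k \<and> a + of_int k < c + r)"

definition S_set :: "real \<Rightarrow> real \<Rightarrow> enat \<Rightarrow> (nat \<Rightarrow> real) set" where
  "S_set \<delta>1 \<delta>2 m = {a \<in> ell1 m. \<exists>i \<in> idx m.
      in_arc (- \<delta>1) ((2 - eta m) * \<delta>2) (a i) \<and>
      (\<forall>j \<in> idx m. j \<noteq> i \<longrightarrow> in_arc 0 ((2 - eta m) * \<delta>2) (a j)) \<and>
      \<delta>1 - (2 - eta m) * \<delta>2 < (\<Sum>j. if j = i then 0 else rz_norm (a j)) \<and>
      (\<Sum>j. if j = i then 0 else rz_norm (a j)) < \<delta>1 + (2 - eta m) * \<delta>2}"

text \<open>F(x) = sum_j (e(a_j) - 1), a representative in C of the class mod Z[i].\<close>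
definition F :: "(nat \<Rightarrow> real) \<Rightarrow> complex" where
  "F a = (\<Sum>j. e (a j) - 1)"

definition gauss_int :: "complex \<Rightarrow> bool" where
  "gauss_int g \<longleftrightarrow> Re g \<in> \<int> \<and> Im g \<in> \<int>"

definition qdist :: "complex \<Rightarrow> complex \<Rightarrow> real" where
  "qdist z w = Inf {cmod (z - w - g) | g. gauss_int g}"

text \<open>A coloring of C/Z[i] coming from a partition into finitely many parts, each of
(quotient) diameter at most d: a Z[i]-periodic function with finitely many values
whose colour classes have all pairwise quotient distances at most d.\<close>
definition admissible_coloring :: "real \<Rightarrow> (complex \<Rightarrow> nat) \<Rightarrow> bool" where
  "admissible_coloring d col \<longleftrightarrow>
     (\<forall>z g. gauss_int g \<longrightarrow> col (z + g) = col z) \<and>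
     finite (range col) \<and>
     (\<forall>z w. col z = col w \<longrightarrow> qdist z w \<le> d)"

end

theory Submission
  imports Defs
begin

(* The second difference F(x + 2s) - 2 F(x + s) + F(x) is the series
   sum_j e(x_j) (e(s_j) - 1)^2.  If x, x + s, x + 2s had one colour, it would lie within
   6 delta2 of a Gaussian integer and hence, being small, within 6 delta2 of 0.  But for
   s in S_m the coordinate s_i ~ -delta1 contributes a term of modulus about (pi delta1)^2,
   while every other coordinate has |e(s_j) - 1| = O(delta2) and the other coordinates
   have total l^1-mass about delta1, so they contribute only O(delta1 delta2).  Since
   delta2 < delta1^3, the second difference is much larger than 6 delta2. *)

lemma e_conv_exp: "e a = exp (\<i> * of_real (2 * pi * a))"
  unfolding e_def by (simp add: algebra_simps)

lemma e_add: "e (a + b) = e a * e b"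
  unfolding e_def by (simp add: distrib_left exp_add)

lemma e_of_int: "e (of_int k) = 1"
proof -
  have "2 * of_real pi * \<i> * of_real (of_int k) = \<i> * (of_int k * (of_real pi * 2))"
    by (simp only: of_real_of_int_eq mult_ac)
  then show ?thesis
    unfolding e_def by (simp only: exp_2pi_1_int)
qed

lemma e_add_of_int: "e (a + of_int k) = e a"
  by (simp add: e_add e_of_int)

lemma norm_e: "cmod (e a) = 1"
  unfolding e_conv_exp by (simp add: norm_exp_i_times)

lemma norm_e_minus_1: "cmod (e a - 1) = 2 * \<bar>sin (pi * a)\<bar>"
  unfolding e_conv_exp dist_exp_i_1 by simp

lemma norm_e_minus_1_le: "cmod (e a - 1) \<le> 2 * pi * \<bar>a\<bar>"
  using abs_sin_x_le_abs_x[of "pi * a"] by (simp add: norm_e_minus_1 abs_mult)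

lemma norm_e_minus_1_ge:
  assumes "pi * \<bar>a\<bar> \<le> 1"
  shows "pi * \<bar>a\<bar> \<le> cmod (e a - 1)"
proof -
  have taylor: "\<bar>sin (pi * a) - pi * a\<bar> \<le> (pi * a)\<^sup>2 / 2"
    using Maclaurin_sin_bound[of "pi * a" 2] by (simp add: sin_coeff_def numeral_2_eq_2 power2_abs)
  have "(pi * a)\<^sup>2 = (pi * \<bar>a\<bar>) * (pi * \<bar>a\<bar>)"
    by (simp add: power2_eq_square abs_mult_self_eq)
  also have "\<dots> \<le> pi * \<bar>a\<bar>"
    using assms by (simp add: mult_left_le)
  finally have "pi * \<bar>a\<bar> / 2 \<le> \<bar>sin (pi * a)\<bar>"
    using taylor by (auto simp: abs_mult abs_if split: if_splits)
  then show ?thesis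
    by (simp add: norm_e_minus_1)
qed

lemma rz_norm_nonneg: "0 \<le> rz_norm a"
  by (simp add: rz_norm_def)

lemma rz_norm_le: "rz_norm a \<le> \<bar>a + of_int k\<bar>"
  using round_diff_minimal[of a "- k"] by (simp add: rz_norm_def)

lemma rz_norm_add_le: "rz_norm (a + b) \<le> rz_norm a + rz_norm b"
  using rz_norm_le[of "a + b" "- round a - round b"] by (simp add: rz_norm_def)

lemma norm_e_minus_1_le_rz_norm: "cmod (e a - 1) \<le> 2 * pi * rz_norm a"
  using norm_e_minus_1_le[of "a - of_int (round a)"] e_add_of_int[of a "- round a"]
  by (simp add: rz_norm_def)

lemma sums_except_term:
  fixes f :: "nat \<Rightarrow> 'a::real_normed_vector"
  assumes "f sums s"
  shows "(\<lambda>j. if j = i then 0 else f j) sums (s - f i)"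
proof -
  have "(\<lambda>j. f j - (if j = i then f j else 0)) sums (s - f i)"
    by (rule sums_diff[OF assms sums_single])
  then show ?thesis
    by (simp add: if_distrib cong: if_cong)
qed

lemma norm_sums_minus_term_le:
  fixes w :: "nat \<Rightarrow> 'a::banach"
  assumes "w sums D" "summable \<rho>" "\<And>j. j \<noteq> i \<Longrightarrow> norm (w j) \<le> C * \<rho> j"
  shows "norm (D - w i) \<le> C * (\<Sum>j. if j = i then 0 else \<rho> j)"
proof -
  have "D - w i = (\<Sum>j. if j = i then 0 else w j)"
    using sums_except_term[OF assms(1)] by (simp add: sums_iff)
  also have "norm \<dots> \<le> (\<Sum>j. C * (if j = i then 0 else \<rho> j))"
    using sums_except_term[OF summable_sums[OF assms(2)]] assms(3)
    by (intro norm_suminf_le summable_mult) (auto simp: sums_iff)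
  also have "\<dots> = C * (\<Sum>j. if j = i then 0 else \<rho> j)"
    using sums_except_term[OF summable_sums[OF assms(2)]] by (simp add: suminf_mult sums_iff)
  finally show ?thesis .
qed

lemma summable_rz_norm_add:
  assumes "summable (\<lambda>j. rz_norm (a j))" "summable (\<lambda>j. rz_norm (b j))"
  shows "summable (\<lambda>j. rz_norm (a j + b j))"
  by (rule summable_comparison_test[OF _ summable_add[OF assms]])
     (simp add: rz_norm_nonneg rz_norm_add_le)

lemma F_sums:
  assumes "summable (\<lambda>j. rz_norm (a j))"
  shows "(\<lambda>j. e (a j) - 1) sums F a"
proof -
  have "summable (\<lambda>j. norm (e (a j) - 1))"
    by (rule summable_comparison_test[OF _ summable_mult[OF assms, of "2 * pi"]])
       (simp add: norm_e_minus_1_le_rz_norm)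
  then show ?thesis
    unfolding F_def by (rule summable_sums[OF summable_norm_cancel])
qed

lemma F_second_difference_sums:
  assumes x: "summable (\<lambda>j. rz_norm (x j))" and s: "summable (\<lambda>j. rz_norm (s j))"
  shows "(\<lambda>j. e (x j) * (e (s j) - 1)\<^sup>2)
           sums (F (\<lambda>j. x j + 2 * s j) - 2 * F (\<lambda>j. x j + s j) + F x)"
proof -
  have xs: "summable (\<lambda>j. rz_norm (x j + s j))"
    using summable_rz_norm_add[OF x s] .
  have "summable (\<lambda>j. rz_norm ((x j + s j) + s j))"
    using summable_rz_norm_add[OF xs s] .
  then have x2s: "summable (\<lambda>j. rz_norm (x j + 2 * s j))"
    by (simp add: add.assoc)
  have "(\<lambda>j. (e (x j + 2 * s j) - 1) - 2 * (e (x j + s j) - 1) + (e (x j) - 1))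
          sums (F (\<lambda>j. x j + 2 * s j) - 2 * F (\<lambda>j. x j + s j) + F x)"
    using F_sums[OF x] F_sums[OF xs] F_sums[OF x2s] by (intro sums_add sums_diff sums_mult)
  moreover have "(e (x j + 2 * s j) - 1) - 2 * (e (x j + s j) - 1) + (e (x j) - 1)
                   = e (x j) * (e (s j) - 1)\<^sup>2" for j
  proof -
    have "e (x j + 2 * s j) = e (x j) * e (s j) * e (s j)"
      by (simp add: e_add[symmetric] algebra_simps)
    then show ?thesis
      by (simp add: e_add power2_eq_square algebra_simps)
  qed
  ultimately show ?thesis
    by simp
qed

lemma gauss_int_diff: "gauss_int a \<Longrightarrow> gauss_int b \<Longrightarrow> gauss_int (a - b)"
  unfolding gauss_int_def by (simp add: Ints_diff)

lemma gauss_int_add: "gauss_int a \<Longrightarrow> gauss_int b \<Longrightarrow> gauss_int (a + b)"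
  unfolding gauss_int_def by (simp add: Ints_add)

lemma gauss_int_eq_0:
  assumes "gauss_int g" "cmod g < 1"
  shows "g = 0"
proof (rule complex_eqI)
  show "Re g = Re 0"
    using assms abs_Re_le_cmod[of g] by (simp add: gauss_int_def Ints_nonzero_abs_less1)
  show "Im g = Im 0"
    using assms abs_Im_le_cmod[of g] by (simp add: gauss_int_def Ints_nonzero_abs_less1)
qed

lemma qdist_le_imp_near_gauss_int:
  assumes "qdist z w \<le> d" "0 < r"
  obtains g where "gauss_int g" "cmod (z - w - g) < d + r"
proof -
  let ?X = "{cmod (z - w - g) | g. gauss_int g}"
  have "gauss_int 0"
    by (simp add: gauss_int_def)
  then have "?X \<noteq> {}"
    by blast
  moreover have "Inf ?X < d + r"
    using assms unfolding qdist_def by simp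
  ultimately have "\<exists>y \<in> ?X. y < d + r"
    by (rule cInf_lessD)
  then show thesis
    using that by auto
qed

lemma second_difference_near_gauss_int:
  assumes "qdist z0 z1 \<le> d" "qdist z0 z2 \<le> d" "0 < d"
  obtains g where "gauss_int g" "cmod (z2 - 2 * z1 + z0 - g) < 6 * d"
proof -
  obtain g1 where g1: "gauss_int g1" "cmod (z0 - z1 - g1) < 2 * d"
    using qdist_le_imp_near_gauss_int[OF assms(1,3)] by auto
  obtain g2 where g2: "gauss_int g2" "cmod (z0 - z2 - g2) < 2 * d"
    using qdist_le_imp_near_gauss_int[OF assms(2,3)] by auto
  have "z2 - 2 * z1 + z0 - (g1 + g1 - g2) = 2 * (z0 - z1 - g1) - (z0 - z2 - g2)"
    by (simp add: algebra_simps)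
  then have "cmod (z2 - 2 * z1 + z0 - (g1 + g1 - g2))
               \<le> cmod (2 * (z0 - z1 - g1)) + cmod (z0 - z2 - g2)"
    by (simp only: norm_triangle_ineq4)
  also have "\<dots> = 2 * cmod (z0 - z1 - g1) + cmod (z0 - z2 - g2)"
    using norm_mult[of 2 "z0 - z1 - g1"] by simp
  finally have "cmod (z2 - 2 * z1 + z0 - (g1 + g1 - g2)) < 6 * d"
    using g1 g2 by linarith
  then show thesis
    using that g1 g2 gauss_int_add gauss_int_diff by blast
qed

lemma S_set_dominant_coordinate:
  assumes "s \<in> S_set d1 d2 m" "0 \<le> d2"
  obtains i t where "e (s i) = e t" "\<bar>t + d1\<bar> < 2 * d2"
    "\<And>j. j \<noteq> i \<Longrightarrow> cmod (e (s j) - 1) \<le> 4 * pi * d2"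
    "(\<Sum>j. if j = i then 0 else rz_norm (s j)) < d1 + 2 * d2"
proof -
  define r where "r = (2 - eta m) * d2"
  have "0 \<le> eta m"
    by (cases m) (simp_all add: eta_def)
  then have r: "r \<le> 2 * d2"
    using assms(2) by (simp add: r_def algebra_simps)
  from assms(1) obtain i where i: "in_arc (- d1) r (s i)"
      and others: "\<forall>j \<in> idx m. j \<noteq> i \<longrightarrow> in_arc 0 r (s j)"
      and tail: "(\<Sum>j. if j = i then 0 else rz_norm (s j)) < d1 + r"
      and s: "s \<in> ell1 m"
    unfolding S_set_def r_def by blast
  from i obtain k :: int where "- d1 - r < s i + of_int k" "s i + of_int k < - d1 + r"
    unfolding in_arc_def by blast
  then have k: "\<bar>s i + of_int k + d1\<bar> < r"
    by (simp add: abs_less_iff)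
  have "cmod (e (s j) - 1) \<le> 4 * pi * d2" if ji: "j \<noteq> i" for j
  proof (cases "j \<in> idx m")
    case True
    then obtain kj :: int where "0 - r < s j + of_int kj" "s j + of_int kj < 0 + r"
      using others ji unfolding in_arc_def by blast
    then have "\<bar>s j + of_int kj\<bar> < r"
      by (simp add: abs_less_iff)
    have "cmod (e (s j) - 1) \<le> 2 * pi * \<bar>s j + of_int kj\<bar>"
      using norm_e_minus_1_le[of "s j + of_int kj"] by (simp add: e_add_of_int)
    also have "\<dots> \<le> 2 * pi * (2 * d2)"
      using \<open>\<bar>s j + of_int kj\<bar> < r\<close> r by (intro mult_left_mono) auto
    finally show ?thesis
      by simp
  next
    case False
    then have "s j = 0"
      using s unfolding ell1_def by blast
    then show ?thesis
      using assms(2) by (simp add: e_def)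
  qed
  then show thesis
    using that[of i "s i + of_int k"] k tail r by (simp add: e_add_of_int)
qed

lemma dominant_term_estimates:
  fixes d1 d2 t :: real
  assumes d1: "0 < d1" "d1 < 1/100" and d2: "0 < d2" "d2 < d1 ^ 3"
    and t: "\<bar>t + d1\<bar> < 2 * d2"
  shows "(cmod (e t - 1))\<^sup>2 + 8 * pi\<^sup>2 * d2 * (d1 + 2 * d2) + 6 * d2 < 1"
    and "8 * pi\<^sup>2 * d2 * (d1 + 2 * d2) + 6 * d2 < (cmod (e t - 1))\<^sup>2"
proof -
  let ?c = "cmod (e t - 1)" and ?Q = "d1\<^sup>2"
  have Q: "?Q < 1/10000"
    using d1 mult_strict_mono[of d1 "1/100" d1 "1/100"] by (simp add: power2_eq_square)
  have "d1 ^ 3 \<le> ?Q / 100"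
    using d1 by (simp add: power2_eq_square power3_eq_cube)
  then have d2_Q: "d2 \<le> ?Q / 100"
    using d2 by linarith
  have "?Q \<le> d1 / 100"
    using d1 mult_left_mono[of d1 "1/100" d1] by (simp add: power2_eq_square)
  then have "d2 \<le> d1 / 10000"
    using d2_Q by linarith
  then have t_bounds: "d1 / 2 \<le> \<bar>t\<bar>" "\<bar>t\<bar> \<le> 2 * d1"
    using t d1 by auto
  have pi2: "9 \<le> pi\<^sup>2" "pi\<^sup>2 \<le> 16"
    using pi_gt3 pi_less_4 power_mono[of 3 pi 2] power_mono[of pi 4 2] by auto
  have "pi * \<bar>t\<bar> \<le> 1"
    using pi_less_4 t_bounds d1 mult_mono[of pi 4 "\<bar>t\<bar>" "2 * d1"] by auto
  moreover have "pi * (d1 / 2) \<le> pi * \<bar>t\<bar>"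
    using t_bounds by (intro mult_left_mono) auto
  ultimately have "pi * (d1 / 2) \<le> ?c"
    using norm_e_minus_1_ge[of t] by linarith
  then have "(pi * (d1 / 2))\<^sup>2 \<le> ?c\<^sup>2"
    using d1 by (intro power_mono) auto
  moreover have "(pi * (d1 / 2))\<^sup>2 = pi\<^sup>2 * ?Q / 4"
    by (simp add: power_mult_distrib power_divide)
  ultimately have c_lower: "9 / 4 * ?Q \<le> ?c\<^sup>2"
    using pi2 mult_right_mono[of 9 "pi\<^sup>2" ?Q] by simp
  have "?c \<le> 16 * d1"
    using norm_e_minus_1_le[of t] pi_less_4 t_bounds mult_mono[of "2 * pi" 8 "\<bar>t\<bar>" "2 * d1"] by auto
  then have c_upper: "?c\<^sup>2 \<le> 256 * ?Q"
    using power_mono[of ?c "16 * d1" 2] by (simp add: power_mult_distrib)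
  have "8 * pi\<^sup>2 * d2 * (d1 + 2 * d2) \<le> 128 * d2 * (2 * d1)"
    using pi2 d2 \<open>d2 \<le> d1 / 10000\<close> by (intro mult_mono) auto
  also have "\<dots> = 256 * d2 * d1"
    by simp
  also have "\<dots> \<le> 256 * (?Q / 100) * (1 / 100)"
    using d1 d2 d2_Q by (intro mult_mono) auto
  finally have E: "8 * pi\<^sup>2 * d2 * (d1 + 2 * d2) \<le> 256 / 10000 * ?Q"
    by simp
  show "?c\<^sup>2 + 8 * pi\<^sup>2 * d2 * (d1 + 2 * d2) + 6 * d2 < 1"
    using c_upper E d2_Q Q by linarith
  show "8 * pi\<^sup>2 * d2 * (d1 + 2 * d2) + 6 * d2 < ?c\<^sup>2"
    using c_lower E d2_Q \<open>0 < d1\<close>[THEN zero_less_power[of _ 2]] by linarith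
qed

lemma S_set_second_difference_estimate:
  assumes x: "x \<in> ell1 m" and s: "s \<in> S_set d1 d2 m" and d2: "0 < d2"
  obtains t where "\<bar>t + d1\<bar> < 2 * d2"
    "\<bar>cmod (F (\<lambda>j. x j + 2 * s j) - 2 * F (\<lambda>j. x j + s j) + F x) - (cmod (e t - 1))\<^sup>2\<bar>
       \<le> 8 * pi\<^sup>2 * d2 * (d1 + 2 * d2)"
proof -
  obtain i t where t: "e (s i) = e t" "\<bar>t + d1\<bar> < 2 * d2"
      and small: "\<And>j. j \<noteq> i \<Longrightarrow> cmod (e (s j) - 1) \<le> 4 * pi * d2"
      and tail: "(\<Sum>j. if j = i then 0 else rz_norm (s j)) < d1 + 2 * d2"
    using S_set_dominant_coordinate[OF s] d2 by auto
  define D where "D = F (\<lambda>j. x j + 2 * s j) - 2 * F (\<lambda>j. x j + s j) + F x"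
  define w where "w j = e (x j) * (e (s j) - 1)\<^sup>2" for j
  have summable_s: "summable (\<lambda>j. rz_norm (s j))"
    using s by (simp add: S_set_def ell1_def)
  have "w sums D"
    using F_second_difference_sums[OF _ summable_s] x unfolding w_def D_def ell1_def by blast
  have norm_w: "norm (w j) = (cmod (e (s j) - 1))\<^sup>2" for j
    by (simp add: w_def norm_mult norm_power norm_e)
  have "norm (w j) \<le> 8 * pi\<^sup>2 * d2 * rz_norm (s j)" if "j \<noteq> i" for j
  proof -
    have "(cmod (e (s j) - 1))\<^sup>2 \<le> (4 * pi * d2) * (2 * pi * rz_norm (s j))"
      unfolding power2_eq_square using small[OF that] norm_e_minus_1_le_rz_norm[of "s j"] d2
      by (intro mult_mono) auto
    then show ?thesis
      by (simp add: norm_w power2_eq_square mult_ac)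
  qed
  then have "norm (D - w i) \<le> 8 * pi\<^sup>2 * d2 * (\<Sum>j. if j = i then 0 else rz_norm (s j))"
    by (rule norm_sums_minus_term_le[OF \<open>w sums D\<close> summable_s])
  also have "\<dots> \<le> 8 * pi\<^sup>2 * d2 * (d1 + 2 * d2)"
    using tail d2 by (intro mult_left_mono) auto
  finally have "\<bar>cmod D - norm (w i)\<bar> \<le> 8 * pi\<^sup>2 * d2 * (d1 + 2 * d2)"
    using norm_triangle_ineq3[of D "w i"] by linarith
  then show thesis
    using that t(2) by (simp add: D_def norm_w t(1))
qed

lemma S_set_progression_not_qdist_close:
  assumes d1: "0 < d1" "d1 < 1/100" and d2: "0 < d2" "d2 < d1 ^ 3"
    and x: "x \<in> ell1 m" and s: "s \<in> S_set d1 d2 m"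
  shows "\<not> (qdist (F x) (F (\<lambda>j. x j + s j)) \<le> d2 \<and> qdist (F x) (F (\<lambda>j. x j + 2 * s j)) \<le> d2)"
proof
  assume "qdist (F x) (F (\<lambda>j. x j + s j)) \<le> d2 \<and> qdist (F x) (F (\<lambda>j. x j + 2 * s j)) \<le> d2"
  then obtain g where g: "gauss_int g"
      "cmod (F (\<lambda>j. x j + 2 * s j) - 2 * F (\<lambda>j. x j + s j) + F x - g) < 6 * d2"
    using second_difference_near_gauss_int[of "F x" _ d2] d2 by blast
  define D where "D = F (\<lambda>j. x j + 2 * s j) - 2 * F (\<lambda>j. x j + s j) + F x"
  obtain t where t: "\<bar>t + d1\<bar> < 2 * d2"
      and D: "\<bar>cmod D - (cmod (e t - 1))\<^sup>2\<bar> \<le> 8 * pi\<^sup>2 * d2 * (d1 + 2 * d2)"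
    using S_set_second_difference_estimate[OF x s d2(1)] unfolding D_def by blast
  note estimates = dominant_term_estimates[OF d1 d2 t]
  have "cmod g \<le> cmod D + cmod (D - g)"
    using norm_triangle_ineq4[of D "D - g"] by simp
  then have "g = 0"
    using g D estimates(1) unfolding D_def by (intro gauss_int_eq_0) auto
  then show False
    using g D estimates(2) unfolding D_def by simp
qed

theorem mainTheorem4:
  shows "\<exists>\<delta>0 > (0::real). \<forall>\<delta>1 \<delta>2 (m::enat) col.
     0 < \<delta>1 \<and> \<delta>1 < \<delta>0 \<and> 0 < \<delta>2 \<and> \<delta>2 < \<delta>1 ^ 3 \<and>
     (\<exists>n::nat. \<delta>1 / \<delta>2 = real n) \<and> admissible_coloring \<delta>2 col \<longrightarrow>
     (\<forall>x \<in> ell1 m. \<forall>s \<in> S_set \<delta>1 \<delta>2 m.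
        \<not> (col (F x) = col (F (\<lambda>j. x j + s j)) \<and>
           col (F x) = col (F (\<lambda>j. x j + 2 * s j))))"
proof (intro exI[of _ "1/100"] conjI allI impI ballI)
  fix d1 d2 :: real and m col x s
  assume h: "0 < d1 \<and> d1 < 1/100 \<and> 0 < d2 \<and> d2 < d1 ^ 3 \<and>
      (\<exists>n::nat. d1 / d2 = real n) \<and> admissible_coloring d2 col"
    and x: "x \<in> ell1 m" and s: "s \<in> S_set d1 d2 m"
  then have "qdist z w \<le> d2" if "col z = col w" for z w
    using that unfolding admissible_coloring_def by blast
  then show "\<not> (col (F x) = col (F (\<lambda>j. x j + s j)) \<and> col (F x) = col (F (\<lambda>j. x j + 2 * s j)))"
    using S_set_progression_not_qdist_close[OF _ _ _ _ x s] h by blast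
qed simp

end
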